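(* Every statistically convergent sequence in an $S$-metric space $(X,S)$ has a convergent subsequence.
   Context: An $S$-metric on a nonempty set $X$ is a function $S:X^3\to[0,\infty)$ such that for all $x,y,z,a\in X$: $S(x,y,z)=0$ if and only if $x=y=z$, and $S(x,y,z)\le S(x,x,a)+S(y,y,a)+S(z,z,a)$. A sequence $\{y_n\}$ converges to $y$ if for every $\varepsilon>0$ there is $k$ with $S(y_n,y_n,y)<\varepsilon$ for all $n\ge k$. For $B\subset\mathbb N$ the natural density is $\delta(B)=\lim_{n\to\infty}\frac{|\{k\in B:k\le n\}|}{n}$ when the limit exists. A sequence $\{x_n\}$ is statistically convergent to $x\in X$ if for every $\varepsilon>0$, $\delta(\{n\in\mathbb N: S(x_n,x_n,x)\ge\varepsilon\})=0$. *)

theory Defs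
  imports "HOL-Analysis.Analysis"
begin

definition S_metric :: "'a set \<Rightarrow> ('a \<Rightarrow> 'a \<Rightarrow> 'a \<Rightarrow> real) \<Rightarrow> bool" where
  "S_metric X S \<longleftrightarrow> X \<noteq> {} \<and>
     (\<forall>x\<in>X. \<forall>y\<in>X. \<forall>z\<in>X. S x y z \<ge> 0) \<and>
     (\<forall>x\<in>X. \<forall>y\<in>X. \<forall>z\<in>X. S x y z = 0 \<longleftrightarrow> x = y \<and> y = z) \<and>
     (\<forall>x\<in>X. \<forall>y\<in>X. \<forall>z\<in>X. \<forall>a\<in>X. S x y z \<le> S x x a + S y y a + S z z a)"

definition S_converges :: "('a \<Rightarrow> 'a \<Rightarrow> 'a \<Rightarrow> real) \<Rightarrow> (nat \<Rightarrow> 'a) \<Rightarrow> 'a \<Rightarrow> bool" where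
  "S_converges S y l \<longleftrightarrow> (\<forall>\<epsilon>>0. \<exists>k. \<forall>n\<ge>k. S (y n) (y n) l < \<epsilon>)"

definition has_natural_density :: "nat set \<Rightarrow> real \<Rightarrow> bool" where
  "has_natural_density B d \<longleftrightarrow>
     ((\<lambda>n. real (card {k\<in>B. 1 \<le> k \<and> k \<le> n}) / real n) \<longlonglongrightarrow> d)"

definition S_stat_converges :: "('a \<Rightarrow> 'a \<Rightarrow> 'a \<Rightarrow> real) \<Rightarrow> (nat \<Rightarrow> 'a) \<Rightarrow> 'a \<Rightarrow> bool" where
  "S_stat_converges S x l \<longleftrightarrow>
     (\<forall>\<epsilon>>0. has_natural_density {n. 1 \<le> n \<and> S (x n) (x n) l \<ge> \<epsilon>} 0)"

end

theory Submission
  imports Defs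
begin

text \<open>Statistical convergence to l says that for each \<open>\<epsilon> > 0\<close> the indices with
  \<open>S (x n) (x n) l \<ge> \<epsilon>\<close> have density zero, so infinitely many indices satisfy
  \<open>S (x n) (x n) l < \<epsilon>\<close>. Choosing increasing indices \<open>r k\<close> with
  \<open>S (x (r k)) (x (r k)) l < 1 / (k + 1)\<close> gives a subsequence converging to l itself.\<close>

lemma natural_density_less_one_imp_infinite_compl:
  assumes density: "has_natural_density B d" and "d < 1"
  shows "infinite (- B)"
proof
  assume "finite (- B)"
  then obtain N where N: "\<And>k. k \<notin> B \<Longrightarrow> k \<le> N"
    by (auto simp: finite_nat_set_iff_bounded_le)
  have "1 - real N / real n \<le> real (card {k\<in>B. 1 \<le> k \<and> k \<le> n}) / real n"
    if "N < n" for n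
  proof -
    have "{N+1..n} \<subseteq> {k\<in>B. 1 \<le> k \<and> k \<le> n}"
      using N by fastforce
    then have "card {N+1..n} \<le> card {k\<in>B. 1 \<le> k \<and> k \<le> n}"
      by (intro card_mono) auto
    then have "real n - real N \<le> real (card {k\<in>B. 1 \<le> k \<and> k \<le> n})"
      using that by (simp add: of_nat_diff)
    moreover have "1 - real N / real n = (real n - real N) / real n"
      using that by (simp add: field_simps)
    ultimately show ?thesis
      by (simp add: divide_right_mono)
  qed
  then have "\<forall>\<^sub>F n in sequentially.
      1 - real N / real n \<le> real (card {k\<in>B. 1 \<le> k \<and> k \<le> n}) / real n"
    by (auto simp: eventually_sequentially intro: exI[of _ "Suc N"])
  moreover have "(\<lambda>n. 1 - real N / real n) \<longlonglongrightarrow> 1"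
    using tendsto_diff[OF tendsto_const lim_const_over_n] by simp
  ultimately have "1 \<le> d"
    using density unfolding has_natural_density_def
    by (intro tendsto_le[OF trivial_limit_sequentially]) auto
  with \<open>d < 1\<close> show False
    by simp
qed

lemma strict_mono_choice_from_infinite_sets:
  fixes A :: "nat \<Rightarrow> nat set"
  assumes "\<And>k. infinite (A k)"
  shows "\<exists>r. strict_mono r \<and> (\<forall>k. r k \<in> A k)"
proof -
  have unbounded: "\<exists>n'. n' \<in> A k \<and> n < n'" for k n
    using assms[of k] unfolding infinite_nat_iff_unbounded by blast
  obtain r where "\<forall>k. r k \<in> A k \<and> r k < r (Suc k)"
    using dependent_nat_choice[of "\<lambda>k n. n \<in> A k" "\<lambda>_ n n'. n < n'"] unbounded
    by blast
  then show ?thesis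
    by (auto intro: strict_monoI_Suc)
qed

lemma S_stat_converges_infinite_close:
  assumes "S_stat_converges S x l" and "\<epsilon> > 0"
  shows "infinite {n. S (x n) (x n) l < \<epsilon>}"
proof -
  have "infinite (- {n. 1 \<le> n \<and> \<epsilon> \<le> S (x n) (x n) l})"
    using assms unfolding S_stat_converges_def
    by (intro natural_density_less_one_imp_infinite_compl) auto
  moreover have "- {n. 1 \<le> n \<and> \<epsilon> \<le> S (x n) (x n) l} \<subseteq> insert 0 {n. S (x n) (x n) l < \<epsilon>}"
    by auto
  ultimately show ?thesis
    using finite_subset by auto
qed

lemma S_stat_converges_imp_subseq_S_converges:
  assumes "S_stat_converges S x l"
  shows "\<exists>r. strict_mono r \<and> S_converges S (x \<circ> r) l"
proof -
  obtain r where r: "strict_mono r" and close: "\<And>k. S (x (r k)) (x (r k)) l < 1 / (real k + 1)"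
    using strict_mono_choice_from_infinite_sets[of "\<lambda>k. {n. S (x n) (x n) l < 1 / (real k + 1)}"]
      S_stat_converges_infinite_close[OF assms]
    by auto
  have "\<exists>k. \<forall>n\<ge>k. S (x (r n)) (x (r n)) l < \<epsilon>" if "\<epsilon> > 0" for \<epsilon>
  proof -
    obtain k where k: "inverse (real (Suc k)) < \<epsilon>"
      using reals_Archimedean \<open>\<epsilon> > 0\<close> by blast
    have "S (x (r n)) (x (r n)) l < \<epsilon>" if "k \<le> n" for n
    proof -
      have "S (x (r n)) (x (r n)) l < 1 / (real n + 1)"
        by (rule close)
      also have "\<dots> \<le> 1 / (real k + 1)"
        using that by (intro divide_left_mono) auto
      finally show ?thesis
        using k by (simp add: inverse_eq_divide add.commute)
    qed
    then show ?thesis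
      by blast
  qed
  with r show ?thesis
    unfolding S_converges_def by auto
qed

theorem corollary3p1:
  fixes X :: "'a set" and S :: "'a \<Rightarrow> 'a \<Rightarrow> 'a \<Rightarrow> real"
    and x :: "nat \<Rightarrow> 'a" and l :: 'a
  assumes "S_metric X S"
    and "\<And>n. x n \<in> X" and "l \<in> X"
    and "S_stat_converges S x l"
  shows "\<exists>r y. strict_mono r \<and> y \<in> X \<and> S_converges S (x \<circ> r) y"
  using S_stat_converges_imp_subseq_S_converges[OF assms(4)] assms(3) by blast

end
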